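(* Let $p\in\{1,\infty\}$ and let $\mathcal J \subseteq 2^{[m]}$ be a nonempty family of forbidden supports for $\mathcal P_{0/p}$. Define $J^{none} := [m]\setminus \bigcup_{J\in\mathcal J} J$ and $J^{some} := [m]\setminus\big(J^{none}\cup \bigcap_{J\in\mathcal J} J\big)$. Then the forbidden support family inequality $$\sum_{j\in J^{none}} 2\, b_j + \sum_{j \in J^{some}} b_j \;\ge\; 2$$ is valid for $\mathsf{MIP}_{0/p}$: every feasible solution $(x,w,b)$ of $\mathsf{MIP}_{0/p}$ satisfies it.
   Context: Data: a matrix $H=(h_{ij}) \in \mathbb{R}^{n\times m}$, a vector $y \in \mathbb{R}^n$, thresholds $\alpha_1 \ge 0$ and $\alpha_\infty \ge 0$, and a constant $M>0$. For a positive integer $t$, write $[t]=\{1,\dots,t\}$. For $J\subseteq[m]$, $H^J$ denotes the submatrix of $H$ consisting of the columns indexed by $J$, and $x^J$ the subvector of $x$ indexed by $J$. A set $J \subseteq [m]$ is a forbidden support for $\mathcal P_{0/p}$ if $\min_{x^J} \|y - H^J x^J\|_p > \alpha_p$, i.e. there is no $x \in \mathbb{R}^m$ with $x_j = 0$ for all $j \notin J$ and $\|y - Hx\|_p \le \alpha_p$. $\mathsf{MIP}_{0/1}$ is the set of $(x,w,b) \in \mathbb{R}^m \times \mathbb{R}^n \times \{0,1\}^m$ satisfying $-Mb_j \le x_j \le M b_j$ for all $j\in[m]$, $-w_i \le y_i - \sum_{j\in[m]} h_{ij}x_j \le w_i$ for all $i \in [n]$, and $\sum_{i\in[n]} w_i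 \le \alpha_1$. $\mathsf{MIP}_{0/\infty}$ is the set of $(x,w,b) \in \mathbb{R}^m \times \mathbb{R} \times \{0,1\}^m$ satisfying $-Mb_j \le x_j \le M b_j$ for all $j\in[m]$, $-w \le y_i - \sum_{j\in[m]} h_{ij}x_j \le w$ for all $i \in [n]$, and $w \le \alpha_\infty$. An inequality in the variables $b$ is valid for $\mathsf{MIP}_{0/p}$ if it is satisfied by every feasible point of $\mathsf{MIP}_{0/p}$. *)

theory Defs
  imports Complex_Main
begin

text \<open>Data: H as a function of row index i in {1..n} and column index j in {1..m};
 vectors are functions nat => real, only the entries indexed by [n] resp. [m] matter.\<close>

datatype pnorm = P1 | Pinf

definition resid :: "(nat \<Rightarrow> nat \<Rightarrow> real) \<Rightarrow> (nat \<Rightarrow> real) \<Rightarrow> nat \<Rightarrow> (nat \<Rightarrow> real) \<Rightarrow> nat \<Rightarrow> real" where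
  "resid H y m x i = y i - (\<Sum>j\<in>{1..m}. H i j * x j)"

definition resid_norm :: "pnorm \<Rightarrow> (nat \<Rightarrow> nat \<Rightarrow> real) \<Rightarrow> (nat \<Rightarrow> real) \<Rightarrow> nat \<Rightarrow> nat \<Rightarrow> (nat \<Rightarrow> real) \<Rightarrow> real" where
  "resid_norm p H y n m x = (case p of
      P1 \<Rightarrow> (\<Sum>i\<in>{1..n}. \<bar>resid H y m x i\<bar>)
    | Pinf \<Rightarrow> Max (insert 0 ((\<lambda>i. \<bar>resid H y m x i\<bar>) ` {1..n})))"

definition alpha_p :: "pnorm \<Rightarrow> real \<Rightarrow> real \<Rightarrow> real" where
  "alpha_p p a1 ainf = (case p of P1 \<Rightarrow> a1 | Pinf \<Rightarrow> ainf)"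

definition forbidden_support :: "pnorm \<Rightarrow> (nat \<Rightarrow> nat \<Rightarrow> real) \<Rightarrow> (nat \<Rightarrow> real) \<Rightarrow> nat \<Rightarrow> nat \<Rightarrow> real \<Rightarrow> real \<Rightarrow> nat set \<Rightarrow> bool" where
  "forbidden_support p H y n m a1 ainf J \<longleftrightarrow>
     J \<subseteq> {1..m} \<and>
     \<not> (\<exists>x. (\<forall>j\<in>{1..m} - J. x j = 0) \<and> resid_norm p H y n m x \<le> alpha_p p a1 ainf)"

definition in_MIP01 :: "(nat \<Rightarrow> nat \<Rightarrow> real) \<Rightarrow> (nat \<Rightarrow> real) \<Rightarrow> nat \<Rightarrow> nat \<Rightarrow> real \<Rightarrow> real
    \<Rightarrow> (nat \<Rightarrow> real) \<Rightarrow> (nat \<Rightarrow> real) \<Rightarrow> (nat \<Rightarrow> real) \<Rightarrow> bool" where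
  "in_MIP01 H y n m a1 M x w b \<longleftrightarrow>
     (\<forall>j\<in>{1..m}. b j \<in> {0,1} \<and> - M * b j \<le> x j \<and> x j \<le> M * b j) \<and>
     (\<forall>i\<in>{1..n}. - w i \<le> resid H y m x i \<and> resid H y m x i \<le> w i) \<and>
     (\<Sum>i\<in>{1..n}. w i) \<le> a1"

definition in_MIP0inf :: "(nat \<Rightarrow> nat \<Rightarrow> real) \<Rightarrow> (nat \<Rightarrow> real) \<Rightarrow> nat \<Rightarrow> nat \<Rightarrow> real \<Rightarrow> real
    \<Rightarrow> (nat \<Rightarrow> real) \<Rightarrow> real \<Rightarrow> (nat \<Rightarrow> real) \<Rightarrow> bool" where
  "in_MIP0inf H y n m ainf M x w b \<longleftrightarrow>
     (\<forall>j\<in>{1..m}. b j \<in> {0,1} \<and> - M * b j \<le> x j \<and> x j \<le> M * b j) \<and>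
     (\<forall>i\<in>{1..n}. - w \<le> resid H y m x i \<and> resid H y m x i \<le> w) \<and>
     w \<le> ainf"

definition valid_MIP :: "pnorm \<Rightarrow> (nat \<Rightarrow> nat \<Rightarrow> real) \<Rightarrow> (nat \<Rightarrow> real) \<Rightarrow> nat \<Rightarrow> nat \<Rightarrow> real \<Rightarrow> real \<Rightarrow> real
    \<Rightarrow> ((nat \<Rightarrow> real) \<Rightarrow> bool) \<Rightarrow> bool" where
  "valid_MIP p H y n m a1 ainf M F \<longleftrightarrow> (case p of
      P1 \<Rightarrow> (\<forall>x w b. in_MIP01 H y n m a1 M x w b \<longrightarrow> F b)
    | Pinf \<Rightarrow> (\<forall>x w b. in_MIP0inf H y n m ainf M x w b \<longrightarrow> F b))"

end

theory Submission
  imports Defs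
begin

text \<open>A feasible point of the MIP gives an x with residual norm at most alpha whose support
  lies in S = {j. b j = 1}, so S is contained in no forbidden support. If S meets Jnone, that
  index alone contributes 2. Otherwise pick J0 in the family and j1 in S - J0; j1 lies in some
  member J1, and S - J1 contains a second index j2. Both lie in the union but not in the
  intersection, i.e. in Jsome, giving two contributions of 1.\<close>

lemma family_escape_sum_ge_2:
  fixes b :: "'a \<Rightarrow> real"
  assumes "finite A" and "\<J> \<noteq> {}"
    and nonneg: "\<forall>j\<in>A. b j \<ge> 0"
    and escape: "\<forall>J\<in>\<J>. \<exists>j\<in>A - J. b j \<ge> 1"
  shows "(\<Sum>j\<in>A - \<Union>\<J>. 2 * b j) + (\<Sum>j\<in>A - ((A - \<Union>\<J>) \<union> \<Inter>\<J>). b j) \<ge> 2"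
proof -
  define Jnone where "Jnone = A - \<Union>\<J>"
  define Jsome where "Jsome = A - (Jnone \<union> \<Inter>\<J>)"
  have finite: "finite Jnone" "finite Jsome"
    using \<open>finite A\<close> unfolding Jnone_def Jsome_def by auto
  have none_nonneg: "(\<Sum>j\<in>Jnone. 2 * b j) \<ge> 0"
    using nonneg by (intro sum_nonneg) (auto simp: Jnone_def)
  have some_nonneg: "(\<Sum>j\<in>Jsome. b j) \<ge> 0"
    using nonneg by (intro sum_nonneg) (auto simp: Jsome_def)
  have "(\<Sum>j\<in>Jnone. 2 * b j) + (\<Sum>j\<in>Jsome. b j) \<ge> 2"
  proof (cases "\<exists>j\<in>Jnone. b j \<ge> 1")
    case True
    then obtain j where "j \<in> Jnone" "b j \<ge> 1" by blast
    moreover have "2 * b j \<le> (\<Sum>j\<in>Jnone. 2 * b j)"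
      using \<open>j \<in> Jnone\<close> finite nonneg by (intro member_le_sum) (auto simp: Jnone_def)
    ultimately show ?thesis using some_nonneg by linarith
  next
    case False
    have escape_in_some: "j \<in> Jsome" if "j \<in> A - J" "J \<in> \<J>" "b j \<ge> 1" for j J
      using that False unfolding Jsome_def Jnone_def by auto
    obtain J0 where "J0 \<in> \<J>" using \<open>\<J> \<noteq> {}\<close> by blast
    then obtain j1 where j1: "j1 \<in> A - J0" "b j1 \<ge> 1" using escape by blast
    then have "j1 \<in> \<Union>\<J>" using False unfolding Jnone_def by auto
    then obtain J1 where "J1 \<in> \<J>" "j1 \<in> J1" by blast
    then obtain j2 where j2: "j2 \<in> A - J1" "b j2 \<ge> 1" using escape by blast
    have "j1 \<noteq> j2" using j2 \<open>j1 \<in> J1\<close> by auto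
    have "j1 \<in> Jsome" "j2 \<in> Jsome"
      using escape_in_some j1 j2 \<open>J0 \<in> \<J>\<close> \<open>J1 \<in> \<J>\<close> by auto
    then have "(\<Sum>j\<in>{j1, j2}. b j) \<le> (\<Sum>j\<in>Jsome. b j)"
      using finite nonneg by (intro sum_mono2) (auto simp: Jsome_def)
    moreover have "(\<Sum>j\<in>{j1, j2}. b j) \<ge> 2" using \<open>j1 \<noteq> j2\<close> j1 j2 by simp
    ultimately show ?thesis using none_nonneg by linarith
  qed
  then show ?thesis unfolding Jnone_def Jsome_def .
qed

lemma forbidden_support_escape:
  assumes "forbidden_support p H y n m a1 ainf J"
    and "resid_norm p H y n m x \<le> alpha_p p a1 ainf"
  shows "\<exists>j\<in>{1..m} - J. x j \<noteq> 0"
  using assms unfolding forbidden_support_def by blast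

lemma in_MIP01_resid_norm_le:
  assumes "in_MIP01 H y n m a1 M x w b"
  shows "resid_norm P1 H y n m x \<le> alpha_p P1 a1 ainf"
proof -
  have "(\<Sum>i\<in>{1..n}. \<bar>resid H y m x i\<bar>) \<le> (\<Sum>i\<in>{1..n}. w i)"
    using assms by (intro sum_mono) (force simp: in_MIP01_def abs_le_iff)
  then show ?thesis
    using assms unfolding in_MIP01_def resid_norm_def alpha_p_def by auto
qed

lemma in_MIP0inf_resid_norm_le:
  assumes "in_MIP0inf H y n m ainf M x w b" and "ainf \<ge> 0"
  shows "resid_norm Pinf H y n m x \<le> alpha_p Pinf a1 ainf"
  using assms unfolding in_MIP0inf_def resid_norm_def alpha_p_def
  by (fastforce simp: abs_le_iff)

lemma big_M_point_sum_ge_2: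
  assumes "\<J> \<noteq> {}" and forbidden: "\<forall>J\<in>\<J>. forbidden_support p H y n m a1 ainf J"
    and big_M: "\<forall>j\<in>{1..m}. b j \<in> {0,1} \<and> - M * b j \<le> x j \<and> x j \<le> M * b j"
    and fits: "resid_norm p H y n m x \<le> alpha_p p a1 ainf"
  shows "(\<Sum>j\<in>{1..m} - \<Union>\<J>. 2 * b j) + (\<Sum>j\<in>{1..m} - (({1..m} - \<Union>\<J>) \<union> \<Inter>\<J>). b j) \<ge> 2"
proof (rule family_escape_sum_ge_2)
  show "\<forall>j\<in>{1..m}. b j \<ge> 0" using big_M by auto
  show "\<forall>J\<in>\<J>. \<exists>j\<in>{1..m} - J. b j \<ge> 1"
  proof
    fix J assume "J \<in> \<J>"
    then obtain j where j: "j \<in> {1..m} - J" "x j \<noteq> 0"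
      using forbidden_support_escape forbidden fits by blast
    then have "b j = 1" using big_M by fastforce
    then show "\<exists>j\<in>{1..m} - J. b j \<ge> 1" using j(1) by (intro bexI[of _ j]) simp_all
  qed
qed (use \<open>\<J> \<noteq> {}\<close> in auto)

theorem proposition3:
  fixes p :: pnorm and H :: "nat \<Rightarrow> nat \<Rightarrow> real" and y :: "nat \<Rightarrow> real"
    and n m :: nat and a1 ainf M :: real and \<J> :: "nat set set"
  assumes "a1 \<ge> 0" and "ainf \<ge> 0" and "M > 0"
    and "\<J> \<noteq> {}"
    and "\<forall>J\<in>\<J>. forbidden_support p H y n m a1 ainf J"
  shows "let Jnone = {1..m} - \<Union>\<J>;
             Jsome = {1..m} - (Jnone \<union> \<Inter>\<J>)
         in valid_MIP p H y n m a1 ainf M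
              (\<lambda>b. (\<Sum>j\<in>Jnone. 2 * b j) + (\<Sum>j\<in>Jsome. b j) \<ge> 2)"
proof (cases p)
  case P1
  show ?thesis
    unfolding Let_def valid_MIP_def P1 pnorm.case
  proof (intro allI impI)
    fix x w b assume "in_MIP01 H y n m a1 M x w b"
    then show "(\<Sum>j\<in>{1..m} - \<Union>\<J>. 2 * b j) + (\<Sum>j\<in>{1..m} - (({1..m} - \<Union>\<J>) \<union> \<Inter>\<J>). b j) \<ge> 2"
      using big_M_point_sum_ge_2[OF \<open>\<J> \<noteq> {}\<close> assms(5)] in_MIP01_resid_norm_le
      unfolding P1 in_MIP01_def by blast
  qed
next
  case Pinf
  show ?thesis
    unfolding Let_def valid_MIP_def Pinf pnorm.case
  proof (intro allI impI)
    fix x w b assume "in_MIP0inf H y n m ainf M x w b"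
    then show "(\<Sum>j\<in>{1..m} - \<Union>\<J>. 2 * b j) + (\<Sum>j\<in>{1..m} - (({1..m} - \<Union>\<J>) \<union> \<Inter>\<J>). b j) \<ge> 2"
      using big_M_point_sum_ge_2[OF \<open>\<J> \<noteq> {}\<close> assms(5)]
        in_MIP0inf_resid_norm_le[OF _ \<open>ainf \<ge> 0\<close>]
      unfolding Pinf in_MIP0inf_def by blast
  qed
qed

end
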